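(* Let the setting be as in the context and let $A\in\mathcal T^1(\mathcal H)$ be such that $\mathcal F_U(A)\in L^1(\widehat\Xi)$. Then $\mathcal F_U^{-1}(\mathcal F_U(A))=A$, i.e. $\int_{\widehat\Xi}\mathcal F_U(A)(\xi)\,U_\xi\,d\xi=A$.
   Context: $\Xi$ is a locally compact abelian group; $m:\Xi\times\Xi\to S^1$ separately continuous with $m(x+y,z)m(x,y)=m(x,y+z)m(y,z)$, $m(x,0)=m(0,x)=1$, $m(x,y)=m(-x,-y)$, Heisenberg: $\sigma(x,y)=m(x,y)/m(y,x)$ and $x\mapsto\sigma(x,\cdot)$ a topological isomorphism $\Xi\to\widehat\Xi$. $(U_x)$ is the irreducible strongly continuous square integrable projective unitary representation on $\mathcal H$ with $U_xU_y=m(x,y)U_{x+y}$; Haar measure on $\Xi$ normalized so that $\int_\Xi\langle U_x\varphi_1,\psi_1\rangle\overline{\langle U_x\varphi_2,\psi_2\rangle}dx=\langle\varphi_1,\varphi_2\rangle\overline{\langle\psi_1,\psi_2\rangle}$. $\widehat\Xi$ denotes $\Xi$ with Haar measure rescaled so that the symplectic Fourier transform $\mathcal F_\sigma f(\xi)=\int_\Xi\sigma(x,\xi)f(x)dx$ is unitary $L^2(\Xi)\to L^2(\widehat\Xi)$. $\mathcal F_U(A)(\xi)=\operatorname{tr}(AU_\xi^* )$; for $f\in L^1(\widehat\Xi)$, $\mathcal F_U^{-1}(f)=\int_{\widehat\Xi}f(\xi)U_\xi d\xi\in\mathcal L(\mathcal H)$ (strong/weak integral). *)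

theory Defs
  imports "HOL-Analysis.Analysis"
begin

section \<open>Complex Hilbert spaces (explicit complex structure on a real Banach space)\<close>

definition complex_hilbert :: "(complex \<Rightarrow> 'h::banach \<Rightarrow> 'h) \<Rightarrow> ('h \<Rightarrow> 'h \<Rightarrow> complex) \<Rightarrow> bool" where
  "complex_hilbert smul ip \<longleftrightarrow>
     (\<forall>r x. smul (complex_of_real r) x = r *\<^sub>R x) \<and>
     (\<forall>a b x. smul a (smul b x) = smul (a * b) x) \<and>
     (\<forall>a x y. smul a (x + y) = smul a x + smul a y) \<and>
     (\<forall>a b x. smul (a + b) x = smul a x + smul b x) \<and>
     (\<forall>x y z. ip (x + y) z = ip x z + ip y z) \<and>
     (\<forall>a x y. ip (smul a x) y = a * ip x y) \<and>
     (\<forall>x y. ip y x = cnj (ip x y)) \<and>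
     (\<forall>x. ip x x = complex_of_real ((norm x)\<^sup>2))"

definition clinear_op :: "(complex \<Rightarrow> 'h::banach \<Rightarrow> 'h) \<Rightarrow> ('h \<Rightarrow> 'h) \<Rightarrow> bool" where
  "clinear_op smul A \<longleftrightarrow> (\<forall>x y. A (x + y) = A x + A y) \<and> (\<forall>a x. A (smul a x) = smul a (A x))"

definition bounded_op :: "(complex \<Rightarrow> 'h::banach \<Rightarrow> 'h) \<Rightarrow> ('h \<Rightarrow> 'h) \<Rightarrow> bool" where
  "bounded_op smul A \<longleftrightarrow> clinear_op smul A \<and> (\<exists>K. \<forall>x. norm (A x) \<le> K * norm x)"

definition unitary_op :: "(complex \<Rightarrow> 'h::banach \<Rightarrow> 'h) \<Rightarrow> ('h \<Rightarrow> 'h \<Rightarrow> complex) \<Rightarrow> ('h \<Rightarrow> 'h) \<Rightarrow> bool" where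
  "unitary_op smul ip A \<longleftrightarrow> clinear_op smul A \<and> surj A \<and> (\<forall>x y. ip (A x) (A y) = ip x y)"

definition adjoint_op :: "('h \<Rightarrow> 'h \<Rightarrow> complex) \<Rightarrow> ('h \<Rightarrow> 'h) \<Rightarrow> ('h \<Rightarrow> 'h)" where
  "adjoint_op ip A = (\<lambda>y. THE z. \<forall>x. ip (A x) y = ip x z)"

definition orthonormal_basis :: "('h::banach \<Rightarrow> 'h \<Rightarrow> complex) \<Rightarrow> 'h set \<Rightarrow> bool" where
  "orthonormal_basis ip E \<longleftrightarrow>
     (\<forall>e\<in>E. ip e e = 1) \<and> (\<forall>e\<in>E. \<forall>f\<in>E. e \<noteq> f \<longrightarrow> ip e f = 0) \<and>
     (\<forall>x. (\<forall>e\<in>E. ip x e = 0) \<longrightarrow> x = 0)"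

definition hilbert_schmidt :: "(complex \<Rightarrow> 'h::banach \<Rightarrow> 'h) \<Rightarrow> ('h \<Rightarrow> 'h \<Rightarrow> complex) \<Rightarrow> ('h \<Rightarrow> 'h) \<Rightarrow> bool" where
  "hilbert_schmidt smul ip C \<longleftrightarrow> bounded_op smul C \<and>
     (\<exists>E. orthonormal_basis ip E \<and> (\<lambda>e. (norm (C e))\<^sup>2) summable_on E)"

definition trace_class :: "(complex \<Rightarrow> 'h::banach \<Rightarrow> 'h) \<Rightarrow> ('h \<Rightarrow> 'h \<Rightarrow> complex) \<Rightarrow> ('h \<Rightarrow> 'h) \<Rightarrow> bool" where
  "trace_class smul ip A \<longleftrightarrow>
     (\<exists>B C. hilbert_schmidt smul ip B \<and> hilbert_schmidt smul ip C \<and> A = B \<circ> C)"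

definition trace_op :: "('h::banach \<Rightarrow> 'h \<Rightarrow> complex) \<Rightarrow> ('h \<Rightarrow> 'h) \<Rightarrow> complex" where
  "trace_op ip A = infsum (\<lambda>e. ip (A e) e) (SOME E. orthonormal_basis ip E)"

definition closed_csubspace :: "(complex \<Rightarrow> 'h::banach \<Rightarrow> 'h) \<Rightarrow> 'h set \<Rightarrow> bool" where
  "closed_csubspace smul S \<longleftrightarrow> closed S \<and> 0 \<in> S \<and> (\<forall>x\<in>S. \<forall>y\<in>S. x + y \<in> S) \<and>
     (\<forall>a. \<forall>x\<in>S. smul a x \<in> S)"

definition locally_compact_group :: "'x::{topological_ab_group_add, t2_space} itself \<Rightarrow> bool" where
  "locally_compact_group _ \<longleftrightarrow> (\<forall>x::'x. \<exists>U K. open U \<and> compact K \<and> x \<in> U \<and> U \<subseteq> K)"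

definition haar_measure :: "'x::{topological_ab_group_add, t2_space} measure \<Rightarrow> bool" where
  "haar_measure \<mu> \<longleftrightarrow> sets \<mu> = sets borel \<and>
     (\<forall>K. compact K \<longrightarrow> emeasure \<mu> K < \<infinity>) \<and>
     (\<forall>V. open V \<longrightarrow> V \<noteq> {} \<longrightarrow> emeasure \<mu> V > 0) \<and>
     (\<forall>x. \<forall>A \<in> sets borel. emeasure \<mu> ((+) x ` A) = emeasure \<mu> A) \<and>
     (\<forall>A \<in> sets borel. emeasure \<mu> A = (INF V\<in>{V. open V \<and> A \<subseteq> V}. emeasure \<mu> V)) \<and>
     (\<forall>V. open V \<longrightarrow> emeasure \<mu> V = (SUP K\<in>{K. compact K \<and> K \<subseteq> V}. emeasure \<mu> K))"

definition characters :: "('x::topological_ab_group_add \<Rightarrow> complex) set" where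
  "characters = {ch. continuous_on UNIV ch \<and> (\<forall>x. cmod (ch x) = 1) \<and> (\<forall>x y. ch (x + y) = ch x * ch y)}"

text \<open>Compact-open topology (= topology of uniform convergence on compacta) on the dual group.\<close>
definition dual_topology :: "('x::topological_ab_group_add \<Rightarrow> complex) topology" where
  "dual_topology = topology (\<lambda>W. W \<subseteq> characters \<and>
     (\<forall>ch0\<in>W. \<exists>K e. compact K \<and> e > 0 \<and>
        {ch\<in>characters. \<forall>x\<in>K. cmod (ch x - ch0 x) < e} \<subseteq> W))"

definition multiplier :: "('x::topological_ab_group_add \<Rightarrow> 'x \<Rightarrow> complex) \<Rightarrow> bool" where
  "multiplier m \<longleftrightarrow> (\<forall>x y. cmod (m x y) = 1) \<and>
     (\<forall>x. continuous_on UNIV (m x)) \<and> (\<forall>y. continuous_on UNIV (\<lambda>x. m x y)) \<and>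
     (\<forall>x y z. m (x + y) z * m x y = m x (y + z) * m y z) \<and>
     (\<forall>x. m x 0 = 1 \<and> m 0 x = 1) \<and>
     (\<forall>x y. m x y = m (- x) (- y))"

definition sympl :: "('x \<Rightarrow> 'x \<Rightarrow> complex) \<Rightarrow> 'x \<Rightarrow> 'x \<Rightarrow> complex" where
  "sympl m x y = m x y / m y x"

definition heisenberg :: "('x::topological_ab_group_add \<Rightarrow> 'x \<Rightarrow> complex) \<Rightarrow> bool" where
  "heisenberg m \<longleftrightarrow> (\<forall>x y. sympl m (x + y) = (\<lambda>z. sympl m x z * sympl m y z)) \<and>
     homeomorphic_map euclidean dual_topology (sympl m)"

definition sympl_fourier :: "('x \<Rightarrow> 'x \<Rightarrow> complex) \<Rightarrow> 'x measure \<Rightarrow> ('x \<Rightarrow> complex) \<Rightarrow> 'x \<Rightarrow> complex" where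
  "sympl_fourier m \<mu> f = (\<lambda>\<xi>. \<integral>x. sympl m x \<xi> * f x \<partial>\<mu>)"

definition square_integrable :: "'x measure \<Rightarrow> ('x \<Rightarrow> complex) \<Rightarrow> bool" where
  "square_integrable \<mu> f \<longleftrightarrow> f \<in> borel_measurable \<mu> \<and> integrable \<mu> (\<lambda>x. (cmod (f x))\<^sup>2)"

definition fourier_U :: "('h::banach \<Rightarrow> 'h \<Rightarrow> complex) \<Rightarrow> ('x \<Rightarrow> 'h \<Rightarrow> 'h) \<Rightarrow> ('h \<Rightarrow> 'h) \<Rightarrow> 'x \<Rightarrow> complex" where
  "fourier_U ip U A = (\<lambda>\<xi>. trace_op ip (A \<circ> adjoint_op ip (U \<xi>)))"

text \<open>\<open>\<F>\<^sub>U\<^sup>-\<^sup>1(f) = \<integral> f(\<xi>) U\<^sub>\<xi> d\<xi>\<close> as a weak operator integral: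
  the operator \<open>B\<close> with \<open>\<langle>B\<phi>,\<psi>\<rangle> = \<integral> f(\<xi>) \<langle>U\<^sub>\<xi>\<phi>,\<psi>\<rangle> d\<xi>\<close>.\<close>
definition inv_fourier_U :: "('h::banach \<Rightarrow> 'h \<Rightarrow> complex) \<Rightarrow> 'x measure \<Rightarrow> ('x \<Rightarrow> 'h \<Rightarrow> 'h) \<Rightarrow> ('x \<Rightarrow> complex) \<Rightarrow> 'h \<Rightarrow> 'h" where
  "inv_fourier_U ip \<nu> U f = (\<lambda>\<phi>. THE v. \<forall>\<psi>. ip v \<psi> = (\<integral>\<xi>. f \<xi> * ip (U \<xi> \<phi>) \<psi> \<partial>\<nu>))"

end

theory Submission
  imports Defs
begin

text \<open>
  Write \<open>A = B C\<close> with \<open>B\<close> and \<open>C\<close> Hilbert--Schmidt and compute the trace defining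
  \<open>\<F>\<^sub>U(A)(\<xi>) = tr (A U\<^sub>\<xi>\<^sup>*)\<close> in an orthonormal basis \<open>(f)\<close> in which \<open>B\<close> is
  Hilbert--Schmidt: \<open>\<F>\<^sub>U(A)(\<xi>) = \<Sum>\<^sub>f \<langle>B f, U\<^sub>\<xi> C\<^sup>* f\<rangle>\<close>. By the orthogonality relations,
  integrating the \<open>f\<close>-th term against \<open>\<langle>U\<^sub>\<xi> \<phi>, \<psi>\<rangle>\<close> gives \<open>\<langle>C \<phi>, f\<rangle> \<langle>B f, \<psi>\<rangle>\<close>, and these sum
  to \<open>\<langle>A \<phi>, \<psi>\<rangle>\<close>; sum and integral may be interchanged because the terms are dominated by
  \<open>\<parallel>\<phi>\<parallel> \<parallel>\<psi>\<parallel> \<parallel>B f\<parallel> \<parallel>C\<^sup>* f\<parallel>\<close>, which is summable. This is the weak form of the inversion formula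
  with respect to the Haar measure \<open>\<mu>\<close>. The dual measure is \<open>c \<mu>\<close>, and \<open>c = 1\<close>: for \<open>\<phi> \<noteq> 0\<close>
  the function \<open>g(x) = \<bar>\<langle>U\<^sub>x \<phi>, \<phi>\<rangle>\<bar>\<^sup>2\<close> is its own symplectic Fourier transform and is continuous
  with \<open>g(0) \<noteq> 0\<close>, so Plancherel gives \<open>c \<parallel>g\<parallel>\<^sub>2\<^sup>2 = \<parallel>g\<parallel>\<^sub>2\<^sup>2 > 0\<close>.
\<close>

section \<open>Unordered sums\<close>

lemma has_sum_sum:
  fixes f :: "'i \<Rightarrow> 'a \<Rightarrow> 'b::topological_comm_monoid_add"
  assumes "finite F" "\<And>i. i \<in> F \<Longrightarrow> (f i has_sum s i) A"
  shows "((\<lambda>x. \<Sum>i\<in>F. f i x) has_sum (\<Sum>i\<in>F. s i)) A"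
  using assms
proof (induction F rule: finite_induct)
  case empty
  then show ?case by simp
next
  case (insert i F)
  have "((\<lambda>x. f i x + (\<Sum>j\<in>F. f j x)) has_sum s i + sum s F) A"
    using insert by (auto intro: has_sum_add[of "f i"])
  with insert show ?case by simp
qed

lemma summable_on_mult_of_summable_on_square:
  fixes a b :: "'i \<Rightarrow> real"
  assumes "(\<lambda>i. (a i)\<^sup>2) summable_on I" and "(\<lambda>i. (b i)\<^sup>2) summable_on I"
  shows "(\<lambda>i. a i * b i) summable_on I"
proof -
  have "(\<lambda>i. norm (a i * b i)) summable_on I"
  proof (rule summable_on_comparison_test)
    show "(\<lambda>i. (a i)\<^sup>2 + (b i)\<^sup>2) summable_on I"
      by (rule summable_on_add[OF assms])
    show "norm (a i * b i) \<le> (a i)\<^sup>2 + (b i)\<^sup>2" for i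
    proof -
      have "2 * (\<bar>a i\<bar> * \<bar>b i\<bar>) \<le> (a i)\<^sup>2 + (b i)\<^sup>2"
        using sum_squares_bound[of "\<bar>a i\<bar>" "\<bar>b i\<bar>"] by (simp add: mult.assoc)
      moreover have "0 \<le> \<bar>a i\<bar> * \<bar>b i\<bar>" by simp
      ultimately show ?thesis unfolding real_norm_def abs_mult by linarith
    qed
  qed simp
  then show ?thesis by (rule abs_summable_summable)
qed

lemma summable_on_Cauchy:
  fixes g :: "'i \<Rightarrow> 'b::banach"
  assumes "\<And>d. d > 0 \<Longrightarrow> \<exists>F0. finite F0 \<and> F0 \<subseteq> E \<and>
      (\<forall>F. finite F \<and> F0 \<subseteq> F \<and> F \<subseteq> E \<longrightarrow> dist (sum g F) (sum g F0) < d)"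
  shows "g summable_on E"
proof -
  have "cauchy_filter (filtermap (sum g) (finite_subsets_at_top E))"
  proof (subst cauchy_filter_metric_filtermap, intro allI impI)
    fix e :: real assume "e > 0"
    then obtain F0 where F0: "finite F0" "F0 \<subseteq> E"
      and close: "\<And>F. finite F \<and> F0 \<subseteq> F \<and> F \<subseteq> E \<Longrightarrow> dist (sum g F) (sum g F0) < e/2"
      using assms[of "e/2"] by auto
    show "\<exists>P. eventually P (finite_subsets_at_top E) \<and>
        (\<forall>F F'. P F \<and> P F' \<longrightarrow> dist (sum g F) (sum g F') < e)"
    proof (intro exI conjI allI impI)
      show "eventually (\<lambda>F. finite F \<and> F0 \<subseteq> F \<and> F \<subseteq> E) (finite_subsets_at_top E)"
        unfolding eventually_finite_subsets_at_top using F0 by blast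
      fix F F' assume "(finite F \<and> F0 \<subseteq> F \<and> F \<subseteq> E) \<and> (finite F' \<and> F0 \<subseteq> F' \<and> F' \<subseteq> E)"
      then show "dist (sum g F) (sum g F') < e"
        using close[of F] close[of F'] dist_triangle2[of "sum g F" "sum g F'" "sum g F0"] by auto
    qed
  qed
  then obtain L where "filtermap (sum g) (finite_subsets_at_top E) \<le> nhds L"
    using cauchy_filter_convergent unfolding convergent_filter_iff by blast
  then show ?thesis unfolding summable_on_def has_sum_def filterlim_def by blast
qed

lemma has_sum_imp_sums_reindex:
  assumes "(F has_sum s) I" and "inj_on g S" and "S \<subseteq> I" and "\<And>i. i \<in> I - S \<Longrightarrow> F i = 0"
  shows "(\<lambda>n. if n \<in> g ` S then F (inv_into S g n) else 0) sums s"
proof (rule has_sum_imp_sums)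
  define G where "G n = (if n \<in> g ` S then F (inv_into S g n) else 0)" for n
  have "(F has_sum s) S"
    using assms(1,3,4) has_sum_cong_neutral[of I S F F] by (metis Diff_iff subsetD)
  then have "((G \<circ> g) has_sum s) S"
    using assms(2) by (subst has_sum_cong[where g=F]) (auto simp: G_def)
  then have "(G has_sum s) (g ` S)"
    by (subst has_sum_reindex[OF assms(2)])
  then show "(G has_sum s) UNIV"
    by (subst has_sum_cong_neutral[where T="g ` S"]) (auto simp: G_def)
qed

section \<open>Integration\<close>

lemma integrable_mult_square_integrable:
  fixes X Y :: "'a \<Rightarrow> complex"
  assumes "square_integrable M X" and "square_integrable M Y"
  shows "integrable M (\<lambda>x. X x * Y x)"
proof (rule Bochner_Integration.integrable_bound)
  have [measurable]: "X \<in> borel_measurable M" "Y \<in> borel_measurable M"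
    using assms unfolding square_integrable_def by auto
  show "(\<lambda>x. X x * Y x) \<in> borel_measurable M" by measurable
  show "integrable M (\<lambda>x. (cmod (X x))\<^sup>2 + (cmod (Y x))\<^sup>2)"
    using assms unfolding square_integrable_def by simp
  show "AE x in M. norm (X x * Y x) \<le> norm ((cmod (X x))\<^sup>2 + (cmod (Y x))\<^sup>2)"
  proof (rule AE_I2)
    fix x
    have "2 * (cmod (X x) * cmod (Y x)) \<le> (cmod (X x))\<^sup>2 + (cmod (Y x))\<^sup>2"
      using sum_squares_bound[of "cmod (X x)" "cmod (Y x)"] by (simp add: mult.assoc)
    moreover have "0 \<le> cmod (X x) * cmod (Y x)" by simp
    moreover have "norm ((cmod (X x))\<^sup>2 + (cmod (Y x))\<^sup>2) = (cmod (X x))\<^sup>2 + (cmod (Y x))\<^sup>2"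
      by simp
    ultimately show "norm (X x * Y x) \<le> norm ((cmod (X x))\<^sup>2 + (cmod (Y x))\<^sup>2)"
      unfolding norm_mult by linarith
  qed
qed

lemma integral_norm_mult_le:
  fixes X Y :: "'a \<Rightarrow> complex"
  assumes X: "square_integrable M X" and Y: "square_integrable M Y"
  shows "(\<integral>x. cmod (X x * Y x) \<partial>M)
    \<le> sqrt (\<integral>x. (cmod (X x))\<^sup>2 \<partial>M) * sqrt (\<integral>x. (cmod (Y x))\<^sup>2 \<partial>M)"
proof -
  have [measurable]: "X \<in> borel_measurable M" "Y \<in> borel_measurable M"
    using X Y unfolding square_integrable_def by auto
  define a where "a = (\<integral>x. (cmod (X x))\<^sup>2 \<partial>M)"
  define b where "b = (\<integral>x. (cmod (Y x))\<^sup>2 \<partial>M)"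
  define r where "r = (\<integral>x. cmod (X x * Y x) \<partial>M)"
  have "a \<ge> 0" "b \<ge> 0" "r \<ge> 0" unfolding a_def b_def r_def by auto
  have "(\<integral>\<^sup>+x. ennreal (cmod (X x * Y x)) \<partial>M) = ennreal r"
    unfolding r_def using integrable_mult_square_integrable[OF X Y]
    by (intro nn_integral_eq_integral) auto
  moreover have "(\<integral>\<^sup>+x. ennreal ((cmod (X x))\<^sup>2) \<partial>M) = ennreal a"
    unfolding a_def using X unfolding square_integrable_def
    by (intro nn_integral_eq_integral) auto
  moreover have "(\<integral>\<^sup>+x. ennreal ((cmod (Y x))\<^sup>2) \<partial>M) = ennreal b"
    unfolding b_def using Y unfolding square_integrable_def
    by (intro nn_integral_eq_integral) auto
  moreover have "(\<integral>\<^sup>+x. ennreal (cmod (X x * Y x)) \<partial>M)\<^sup>2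
      \<le> (\<integral>\<^sup>+x. ennreal ((cmod (X x))\<^sup>2) \<partial>M) * (\<integral>\<^sup>+x. ennreal ((cmod (Y x))\<^sup>2) \<partial>M)"
    using Cauchy_Schwarz_nn_integral[of "\<lambda>x. ennreal (cmod (X x))" M "\<lambda>x. ennreal (cmod (Y x))"]
    by (simp add: norm_mult ennreal_mult ennreal_power)
  ultimately have "ennreal (r\<^sup>2) \<le> ennreal (a * b)"
    using \<open>r \<ge> 0\<close> \<open>a \<ge> 0\<close> \<open>b \<ge> 0\<close> by (simp add: ennreal_power ennreal_mult)
  then have "r\<^sup>2 \<le> (sqrt a * sqrt b)\<^sup>2"
    using \<open>a \<ge> 0\<close> \<open>b \<ge> 0\<close> by (simp add: power_mult_distrib)
  then show ?thesis
    unfolding r_def[symmetric] a_def[symmetric] b_def[symmetric]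
    by (rule power2_le_imp_le) (simp add: \<open>a \<ge> 0\<close> \<open>b \<ge> 0\<close>)
qed

lemma integral_infsum_countable_support:
  fixes h :: "'i \<Rightarrow> 'a \<Rightarrow> 'b::{banach, second_countable_topology}"
  assumes "countable S" and SI: "S \<subseteq> I" and vanish: "\<And>i x. i \<in> I - S \<Longrightarrow> h i x = 0"
    and int: "\<And>i. i \<in> I \<Longrightarrow> integrable M (h i)"
    and norm_summable: "\<And>x. (\<lambda>i. norm (h i x)) summable_on I"
    and int_norm_summable: "(\<lambda>i. \<integral>x. norm (h i x) \<partial>M) summable_on I"
  shows "(\<integral>x. (\<Sum>\<^sub>\<infinity>i\<in>I. h i x) \<partial>M) = (\<Sum>\<^sub>\<infinity>i\<in>I. \<integral>x. h i x \<partial>M)"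
proof -
  define g where "g = to_nat_on S"
  have inj: "inj_on g S" unfolding g_def by (rule inj_on_to_nat_on[OF \<open>countable S\<close>])
  define H where "H n x = (if n \<in> g ` S then h (inv_into S g n) x else 0)" for n x
  have int_H: "integrable M (H n)" for n
    using SI unfolding H_def by (cases "n \<in> g ` S") (auto simp: inv_into_f_f[OF inj] intro!: int)
  have "summable (\<lambda>n. norm (H n x))" for x
    using has_sum_imp_sums_reindex[OF has_sum_infsum[OF norm_summable] inj SI, of x] vanish
    unfolding H_def by (auto simp: sums_iff if_distrib cong: if_cong)
  moreover have "summable (\<lambda>n. \<integral>x. norm (H n x) \<partial>M)"
  proof -
    have "(\<integral>x. norm (H n x) \<partial>M) = (if n \<in> g ` S then \<integral>x. norm (h (inv_into S g n) x) \<partial>M else 0)"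
      for n unfolding H_def by (cases "n \<in> g ` S") auto
    then show ?thesis
      using has_sum_imp_sums_reindex[OF has_sum_infsum[OF int_norm_summable] inj SI] vanish
      by (auto simp: sums_iff)
  qed
  ultimately have "(\<lambda>n. \<integral>x. H n x \<partial>M) sums (\<integral>x. (\<Sum>n. H n x) \<partial>M)"
    by (intro sums_integral[OF int_H]) auto
  moreover have "(\<lambda>x. \<Sum>n. H n x) = (\<lambda>x. \<Sum>\<^sub>\<infinity>i\<in>I. h i x)"
    using has_sum_imp_sums_reindex[OF has_sum_infsum[OF abs_summable_summable[OF norm_summable]]
        inj SI] vanish
    unfolding H_def by (auto simp: sums_iff)
  moreover have "(\<lambda>n. \<integral>x. H n x \<partial>M) sums (\<Sum>\<^sub>\<infinity>i\<in>I. \<integral>x. h i x \<partial>M)"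
  proof -
    have int_summable: "(\<lambda>i. \<integral>x. h i x \<partial>M) summable_on I"
      by (rule abs_summable_summable, rule summable_on_comparison_test[OF int_norm_summable])
         (auto intro: integral_norm_bound)
    have "(\<integral>x. H n x \<partial>M) = (if n \<in> g ` S then \<integral>x. h (inv_into S g n) x \<partial>M else 0)"
      for n unfolding H_def by (cases "n \<in> g ` S") auto
    then show ?thesis
      using has_sum_imp_sums_reindex[OF has_sum_infsum[OF int_summable] inj SI] vanish by simp
  qed
  ultimately show ?thesis by (metis sums_unique2)
qed

text \<open>Only the countably many terms with \<open>w i \<noteq> 0\<close> contribute.\<close>
lemma integral_infsum:
  fixes h :: "'i \<Rightarrow> 'a \<Rightarrow> 'b::{banach, second_countable_topology}"
  assumes int: "\<And>i. i \<in> I \<Longrightarrow> integrable M (h i)"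
    and bound: "\<And>i x. i \<in> I \<Longrightarrow> norm (h i x) \<le> w i"
    and int_bound: "\<And>i. i \<in> I \<Longrightarrow> (\<integral>x. norm (h i x) \<partial>M) \<le> w i"
    and w: "w summable_on I"
  shows "(\<integral>x. (\<Sum>\<^sub>\<infinity>i\<in>I. h i x) \<partial>M) = (\<Sum>\<^sub>\<infinity>i\<in>I. \<integral>x. h i x \<partial>M)"
proof (rule integral_infsum_countable_support[OF _ _ _ int])
  show "countable {i \<in> I. w i \<noteq> 0}" by (rule summable_countable_real[OF w])
  show "h i x = 0" if "i \<in> I - {i \<in> I. w i \<noteq> 0}" for i x
    using bound[of i x] that by auto
  show "(\<lambda>i. norm (h i x)) summable_on I" for x
    by (rule summable_on_comparison_test[OF w]) (auto intro: bound)
  show "(\<lambda>i. \<integral>x. norm (h i x) \<partial>M) summable_on I"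
    by (rule summable_on_comparison_test[OF w]) (auto intro: int_bound)
qed auto

lemma integral_scaled_measure:
  fixes q :: "'a \<Rightarrow> 'b::{banach, second_countable_topology}"
  assumes sets: "sets \<nu> = sets \<mu>"
    and scaled: "\<And>B. B \<in> sets \<mu> \<Longrightarrow> emeasure \<nu> B = ennreal c * emeasure \<mu> B"
    and "0 \<le> c" and q: "q \<in> borel_measurable \<mu>"
  shows "(\<integral>x. q x \<partial>\<nu>) = c *\<^sub>R (\<integral>x. q x \<partial>\<mu>)"
proof -
  have "\<nu> = density \<mu> (\<lambda>_. ennreal c)"
  proof (rule measure_eqI)
    fix B assume "B \<in> sets \<nu>"
    then have "B \<in> sets \<mu>" using sets by simp
    then show "emeasure \<nu> B = emeasure (density \<mu> (\<lambda>_. ennreal c)) B"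
      by (simp add: scaled emeasure_density nn_integral_cmult_indicator)
  qed (simp add: sets)
  then show ?thesis
    using integral_density[OF q, of "\<lambda>_. c"] \<open>0 \<le> c\<close> by simp
qed

lemma haar_integral_pos:
  fixes q :: "'x::{topological_ab_group_add, t2_space} \<Rightarrow> real"
  assumes haar: "haar_measure \<mu>" and q: "continuous_on UNIV q" "integrable \<mu> q"
    and nonneg: "\<And>x. 0 \<le> q x" and "q x0 \<noteq> 0"
  shows "0 < (\<integral>x. q x \<partial>\<mu>)"
proof -
  have sets: "sets \<mu> = sets borel" using haar unfolding haar_measure_def by (rule conjunct1)
  have open_pos: "\<forall>V. open V \<longrightarrow> V \<noteq> {} \<longrightarrow> emeasure \<mu> V > 0"
    using haar unfolding haar_measure_def by (elim conjE) assumption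
  define V where "V = {x. q x \<noteq> 0}"
  have "open V"
    unfolding V_def using q(1) by (intro open_Collect_neq) (auto simp: continuous_on_eq_continuous_at)
  moreover have "V \<noteq> {}" using \<open>q x0 \<noteq> 0\<close> unfolding V_def by auto
  ultimately have "emeasure \<mu> V > 0" using open_pos by blast
  moreover have "V \<in> sets \<mu>" using \<open>open V\<close> sets by simp
  ultimately have "\<not> (AE x in \<mu>. q x = 0)"
    by (subst AE_iff_measurable[OF _ refl]) (auto simp: V_def sets_eq_imp_space_eq[OF sets])
  then have "(\<integral>x. q x \<partial>\<mu>) \<noteq> 0"
    using integral_nonneg_eq_0_iff_AE[OF q(2)] nonneg by simp
  moreover have "(\<integral>x. q x \<partial>\<mu>) \<ge> 0" using nonneg by simp
  ultimately show ?thesis by simp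
qed

section \<open>Complex Hilbert spaces\<close>

locale complex_hilbert_space =
  fixes smul :: "complex \<Rightarrow> 'h::banach \<Rightarrow> 'h" and ip :: "'h \<Rightarrow> 'h \<Rightarrow> complex"
  assumes complex_hilbert: "complex_hilbert smul ip"
begin

lemma smul_of_real: "smul (complex_of_real r) x = r *\<^sub>R x"
  and smul_smul: "smul a (smul b x) = smul (a * b) x"
  and ip_add_left: "ip (x + y) z = ip x z + ip y z"
  and ip_smul_left: "ip (smul a x) y = a * ip x y"
  and ip_commute: "ip x y = cnj (ip y x)"
  and ip_self: "ip x x = complex_of_real ((norm x)\<^sup>2)"
  using complex_hilbert unfolding complex_hilbert_def by blast+

lemma smul_one [simp]: "smul 1 x = x"
  using smul_of_real[of 1 x] by simp

lemma ip_add_right: "ip z (x + y) = ip z x + ip z y"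
  by (metis ip_commute ip_add_left complex_cnj_add)

lemma ip_smul_right: "ip x (smul a y) = cnj a * ip x y"
  by (metis ip_commute ip_smul_left complex_cnj_mult)

lemma ip_scaleR_left: "ip (r *\<^sub>R x) y = of_real r * ip x y"
  by (metis smul_of_real ip_smul_left)

lemma ip_scaleR_right: "ip y (r *\<^sub>R x) = of_real r * ip y x"
  by (metis smul_of_real ip_smul_right complex_cnj_complex_of_real)

lemma ip_zero_left [simp]: "ip 0 y = 0"
  using ip_add_left[of 0 0 y] by simp

lemma ip_zero_right [simp]: "ip y 0 = 0"
  by (metis ip_commute ip_zero_left complex_cnj_zero)

lemma ip_minus_right: "ip y (- x) = - ip y x"
  by (metis add.right_inverse add_eq_0_iff ip_add_right ip_zero_right)

lemma ip_diff_left: "ip (x - y) z = ip x z - ip y z"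
  by (metis add_diff_cancel diff_add_cancel eq_diff_eq ip_add_left)

lemma ip_sum_left: "ip (\<Sum>i\<in>I. f i) y = (\<Sum>i\<in>I. ip (f i) y)"
  by (induction I rule: infinite_finite_induct) (auto simp: ip_add_left)

lemma ip_sum_right: "ip y (\<Sum>i\<in>I. f i) = (\<Sum>i\<in>I. ip y (f i))"
  by (induction I rule: infinite_finite_induct) (auto simp: ip_add_right)

lemma norm_ip_commute: "cmod (ip y x) = cmod (ip x y)"
  by (subst ip_commute) simp

lemma ip_mult_ip_commute: "ip x y * ip y x = complex_of_real ((cmod (ip x y))\<^sup>2)"
  by (simp only: ip_commute[of y x] complex_norm_square)

lemma ip_ext_left: assumes "\<And>y. ip x y = ip z y" shows "x = z"
  using assms[of "x - z"] ip_self[of "x - z"] by (simp add: ip_diff_left)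

lemma ip_ext_right: assumes "\<And>y. ip y x = ip y z" shows "x = z"
  by (rule ip_ext_left) (metis assms ip_commute)

lemma norm_add_square: "(norm (x + y))\<^sup>2 = (norm x)\<^sup>2 + 2 * Re (ip x y) + (norm y)\<^sup>2"
proof -
  have "Re (ip (x + y) (x + y)) = Re (ip x x) + Re (ip x y) + Re (ip y x) + Re (ip y y)"
    by (simp add: ip_add_left ip_add_right)
  moreover have "Re (ip y x) = Re (ip x y)" by (subst ip_commute) simp
  ultimately show ?thesis by (simp add: ip_self)
qed

lemma Re_ip_le: "Re (ip x y) \<le> norm x * norm y"
proof (cases "y = 0")
  case False
  then have ny: "norm y > 0" by simp
  define t where "t = - Re (ip x y) / (norm y)\<^sup>2"
  have "0 \<le> (norm (x + t *\<^sub>R y))\<^sup>2" by simp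
  also have "\<dots> = (norm x)\<^sup>2 + 2 * t * Re (ip x y) + t\<^sup>2 * (norm y)\<^sup>2"
    by (simp add: norm_add_square ip_scaleR_right power_mult_distrib)
  also have "\<dots> = (norm x)\<^sup>2 - (Re (ip x y))\<^sup>2 / (norm y)\<^sup>2"
    using ny by (simp add: t_def field_simps power2_eq_square)
  finally have "(Re (ip x y))\<^sup>2 \<le> (norm x * norm y)\<^sup>2"
    using ny by (simp add: field_simps power_mult_distrib)
  then have "\<bar>Re (ip x y)\<bar> \<le> norm x * norm y"
    by (metis abs_le_square_iff abs_of_nonneg mult_nonneg_nonneg norm_ge_zero)
  then show ?thesis by simp
qed simp

lemma norm_smul: "norm (smul a x) = cmod a * norm x"
proof -
  have "ip (smul a x) (smul a x) = (a * cnj a) * ip x x"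
    by (simp add: ip_smul_left ip_smul_right)
  also have "\<dots> = complex_of_real ((cmod a)\<^sup>2 * (norm x)\<^sup>2)"
    by (simp only: complex_norm_square[symmetric] ip_self of_real_mult)
  finally have "(norm (smul a x))\<^sup>2 = (cmod a * norm x)\<^sup>2"
    by (simp only: ip_self of_real_eq_iff power_mult_distrib)
  then show ?thesis by (simp add: power2_eq_iff_nonneg)
qed

text \<open>Cauchy--Schwarz: rotate \<open>x\<close> by a phase that makes \<open>ip x y\<close> real.\<close>
lemma norm_ip_le: "cmod (ip x y) \<le> norm x * norm y"
proof (cases "ip x y = 0")
  case False
  define a where "a = cnj (ip x y) / cmod (ip x y)"
  have "ip (smul a x) y = (cnj (ip x y) * ip x y) / cmod (ip x y)"
    by (simp add: ip_smul_left a_def)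
  also have "\<dots> = complex_of_real (cmod (ip x y))"
    using False by (simp add: complex_norm_square[symmetric] mult.commute power2_eq_square)
  finally have "cmod (ip x y) = Re (ip (smul a x) y)" by simp
  also have "\<dots> \<le> norm (smul a x) * norm y" by (rule Re_ip_le)
  finally show ?thesis using False by (simp add: norm_smul a_def norm_divide)
qed simp

lemma bounded_linear_ip_left: "bounded_linear (\<lambda>x. ip x y)"
  by (rule bounded_linear_intro[where K="norm y"])
     (auto simp: ip_add_left ip_scaleR_left scaleR_conv_of_real norm_ip_le)

lemma bounded_linear_ip_right: "bounded_linear (\<lambda>y. ip x y)"
proof (rule bounded_linear_intro[where K="norm x"])
  show "cmod (ip x y) \<le> norm y * norm x" for y
    using norm_ip_le[of x y] by (simp add: mult.commute)
qed (auto simp: ip_add_right ip_scaleR_right scaleR_conv_of_real)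

lemma bounded_op_bounded_linear:
  assumes "bounded_op smul C" shows "bounded_linear C"
proof -
  from assms obtain K where lin: "clinear_op smul C" and K: "\<And>x. norm (C x) \<le> K * norm x"
    unfolding bounded_op_def by blast
  show ?thesis
    using lin K by (intro bounded_linear_intro[where K=K])
      (auto simp: clinear_op_def mult.commute simp flip: smul_of_real)
qed

lemma bounded_op_smul: "bounded_op smul C \<Longrightarrow> C (smul a x) = smul a (C x)"
  unfolding bounded_op_def clinear_op_def by blast

end

section \<open>Orthonormal bases, adjoints and traces\<close>

context complex_hilbert_space
begin

definition orthonormal :: "'h set \<Rightarrow> bool" where
  "orthonormal E \<longleftrightarrow> (\<forall>e\<in>E. ip e e = 1) \<and> (\<forall>e\<in>E. \<forall>f\<in>E. e \<noteq> f \<longrightarrow> ip e f = 0)"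

lemma orthonormal_basis_imp_orthonormal: "orthonormal_basis ip E \<Longrightarrow> orthonormal E"
  by (simp add: orthonormal_basis_def orthonormal_def)

lemma orthonormal_basis_eq_0:
  assumes "orthonormal_basis ip E" and "\<And>e. e \<in> E \<Longrightarrow> ip x e = 0"
  shows "x = 0"
proof -
  have "\<forall>x. (\<forall>e\<in>E. ip x e = 0) \<longrightarrow> x = 0"
    using assms(1) unfolding orthonormal_basis_def by (elim conjE)
  then show ?thesis using assms(2) by simp
qed

lemma ip_orthonormal_sum_left:
  assumes "orthonormal E" "F \<subseteq> E" "finite F" "f \<in> F"
  shows "ip (\<Sum>e\<in>F. smul (c e) e) f = c f"
proof -
  have "ip (\<Sum>e\<in>F. smul (c e) e) f = (\<Sum>e\<in>F. c e * ip e f)"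
    by (simp add: ip_sum_left ip_smul_left)
  also have "\<dots> = (\<Sum>e\<in>F. if e = f then c e else 0)"
    using assms unfolding orthonormal_def by (intro sum.cong) auto
  finally show ?thesis using assms(3,4) by simp
qed

lemma norm_orthonormal_sum:
  assumes "orthonormal E" "F \<subseteq> E" "finite F"
  shows "(norm (\<Sum>e\<in>F. smul (c e) e))\<^sup>2 = (\<Sum>e\<in>F. (cmod (c e))\<^sup>2)"
proof -
  define v where "v = (\<Sum>e\<in>F. smul (c e) e)"
  have "ip v v = (\<Sum>e\<in>F. cnj (c e) * ip v e)"
    by (simp add: v_def ip_sum_right ip_smul_right)
  also have "\<dots> = (\<Sum>e\<in>F. c e * cnj (c e))"
    by (intro sum.cong refl) (simp add: v_def ip_orthonormal_sum_left[OF assms] mult.commute)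
  finally show ?thesis
    by (simp only: v_def ip_self complex_norm_square[symmetric] of_real_sum[symmetric] of_real_eq_iff)
qed

lemma bessel_inequality:
  assumes "orthonormal E" "F \<subseteq> E" "finite F"
  shows "(\<Sum>e\<in>F. (cmod (ip x e))\<^sup>2) \<le> (norm x)\<^sup>2"
proof -
  define v where "v = (\<Sum>e\<in>F. smul (ip x e) e)"
  define S where "S = (\<Sum>e\<in>F. (cmod (ip x e))\<^sup>2)"
  have "ip x v = (\<Sum>e\<in>F. ip x e * cnj (ip x e))"
    by (simp add: v_def ip_sum_right ip_smul_right mult.commute)
  also have "\<dots> = complex_of_real S"
    by (simp only: S_def complex_norm_square of_real_sum)
  finally have "Re (ip x (- v)) = - S" by (simp add: ip_minus_right)
  moreover have "(norm v)\<^sup>2 = S"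
    unfolding v_def S_def by (rule norm_orthonormal_sum[OF assms])
  ultimately have "(norm (x + - v))\<^sup>2 = (norm x)\<^sup>2 - S"
    by (simp only: norm_add_square norm_minus_cancel)
  then show ?thesis unfolding S_def using zero_le_power2[of "norm (x + - v)"] by linarith
qed

lemma summable_on_bessel:
  "orthonormal E \<Longrightarrow> (\<lambda>e. (cmod (ip x e))\<^sup>2) summable_on E"
  by (rule nonneg_bdd_above_summable_on) (auto intro!: bdd_aboveI bessel_inequality)

lemma summable_on_orthonormal_combination:
  assumes E: "orthonormal E" and c: "(\<lambda>e. (cmod (c e))\<^sup>2) summable_on E"
  shows "(\<lambda>e. smul (c e) e) summable_on E"
proof (rule summable_on_Cauchy)
  fix d :: real assume "d > 0"
  define w where "w e = (cmod (c e))\<^sup>2" for e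
  obtain S where S: "(w has_sum S) E" using c unfolding w_def summable_on_def by blast
  then have "eventually (\<lambda>F. dist (sum w F) S < d\<^sup>2) (finite_subsets_at_top E)"
    using \<open>d > 0\<close> unfolding has_sum_def by (auto simp: tendsto_iff)
  then obtain F0 where F0: "finite F0" "F0 \<subseteq> E"
    and close: "\<And>F. finite F \<and> F0 \<subseteq> F \<and> F \<subseteq> E \<Longrightarrow> dist (sum w F) S < d\<^sup>2"
    unfolding eventually_finite_subsets_at_top by blast
  have "dist (\<Sum>e\<in>F. smul (c e) e) (\<Sum>e\<in>F0. smul (c e) e) < d"
    if F: "finite F" "F0 \<subseteq> F" "F \<subseteq> E" for F
  proof -
    have "(dist (\<Sum>e\<in>F. smul (c e) e) (\<Sum>e\<in>F0. smul (c e) e))\<^sup>2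
        = (norm (\<Sum>e\<in>F - F0. smul (c e) e))\<^sup>2"
      unfolding dist_norm using F by (subst sum_diff) auto
    also have "\<dots> = sum w (F - F0)"
      unfolding w_def using F by (intro norm_orthonormal_sum[OF E]) auto
    also have "\<dots> = sum w F - sum w F0"
      using F by (subst sum_diff) auto
    also have "\<dots> \<le> S - sum w F0"
      using F finite_sum_le_has_sum[OF S, of F] by (simp add: w_def)
    also have "\<dots> < d\<^sup>2" using close[of F0] F0 by (auto simp: dist_real_def)
    finally show ?thesis using \<open>d > 0\<close> by (simp add: power_less_imp_less_base less_imp_le)
  qed
  then show "\<exists>F0. finite F0 \<and> F0 \<subseteq> E \<and> (\<forall>F. finite F \<and> F0 \<subseteq> F \<and> F \<subseteq> E \<longrightarrow>
      dist (\<Sum>e\<in>F. smul (c e) e) (\<Sum>e\<in>F0. smul (c e) e) < d)"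
    using F0 by blast
qed

lemma has_sum_orthonormal_expansion:
  assumes E: "orthonormal_basis ip E"
  shows "((\<lambda>e. smul (ip x e) e) has_sum x) E"
proof -
  have on: "orthonormal E" using E by (rule orthonormal_basis_imp_orthonormal)
  define y where "y = (\<Sum>\<^sub>\<infinity>e\<in>E. smul (ip x e) e)"
  have y: "((\<lambda>e. smul (ip x e) e) has_sum y) E"
    unfolding y_def
    by (rule has_sum_infsum[OF summable_on_orthonormal_combination[OF on summable_on_bessel[OF on]]])
  have "ip (x - y) f = 0" if f: "f \<in> E" for f
  proof -
    have "((\<lambda>e. ip (smul (ip x e) e) f) has_sum ip y f) E"
      by (rule has_sum_bounded_linear[OF bounded_linear_ip_left y])
    moreover have "((\<lambda>e. ip (smul (ip x e) e) f) has_sum ip x f) E"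
    proof -
      have "((\<lambda>e. ip (smul (ip x e) e) f) has_sum ip x f) {f}"
        using on f unfolding orthonormal_def by (intro has_sum_finiteI) (simp_all add: ip_smul_left)
      then show ?thesis
        using on f unfolding orthonormal_def
        by (subst has_sum_cong_neutral[where T="{f}"]) (auto simp: ip_smul_left)
    qed
    ultimately have "ip y f = ip x f" by (rule has_sum_unique)
    then show ?thesis by (simp add: ip_diff_left)
  qed
  then have "x - y = 0" by (rule orthonormal_basis_eq_0[OF E])
  then show ?thesis using y by simp
qed

lemma has_sum_ip_apply:
  assumes "orthonormal_basis ip E" and "bounded_op smul B"
  shows "((\<lambda>f. ip x f * ip (B f) y) has_sum ip (B x) y) E"
  using has_sum_bounded_linear[OF bounded_linear_compose[OF bounded_linear_ip_left
        bounded_op_bounded_linear[OF assms(2)]] has_sum_orthonormal_expansion[OF assms(1)]]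
  by (simp add: bounded_op_smul[OF assms(2)] ip_smul_left)

lemma has_sum_parseval:
  "orthonormal_basis ip E \<Longrightarrow> ((\<lambda>e. ip x e * ip e y) has_sum ip x y) E"
  using has_sum_bounded_linear[OF bounded_linear_ip_left has_sum_orthonormal_expansion]
  by (simp add: ip_smul_left)

lemma has_sum_parseval_norm:
  assumes "orthonormal_basis ip E"
  shows "((\<lambda>e. (cmod (ip x e))\<^sup>2) has_sum (norm x)\<^sup>2) E"
  using has_sum_parseval[OF assms, of x x]
  by (simp only: ip_mult_ip_commute ip_self has_sum_of_real_iff)

lemma riesz_representation:
  assumes E: "orthonormal_basis ip E" and l: "bounded_linear l"
    and l_smul: "\<And>a x. l (smul a x) = a * l x"
  shows "\<exists>z. \<forall>x. l x = ip x z"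
proof -
  have on: "orthonormal E" using E by (rule orthonormal_basis_imp_orthonormal)
  obtain K where K: "\<And>x. cmod (l x) \<le> norm x * K"
    using bounded_linear.bounded[OF l] by blast
  have partial_sums: "(\<Sum>e\<in>F. (cmod (l e))\<^sup>2) \<le> K\<^sup>2" if F: "F \<subseteq> E" "finite F" for F
  proof -
    define v where "v = (\<Sum>e\<in>F. smul (cnj (l e)) e)"
    define S where "S = (\<Sum>e\<in>F. (cmod (l e))\<^sup>2)"
    have "l v = (\<Sum>e\<in>F. cnj (l e) * l e)"
      unfolding v_def by (simp add: linear_sum[OF bounded_linear.linear[OF l]] l_smul)
    then have "l v = complex_of_real S"
      by (simp only: S_def mult.commute[of "cnj _"] complex_norm_square of_real_sum)
    moreover have "(norm v)\<^sup>2 = S"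
      unfolding v_def S_def using norm_orthonormal_sum[OF on F, of "\<lambda>e. cnj (l e)"] by simp
    moreover have "S \<ge> 0" unfolding S_def by (simp add: sum_nonneg)
    ultimately have "S\<^sup>2 \<le> (norm v * K)\<^sup>2"
      using K[of v] by (intro power_mono) auto
    then have "S * S \<le> S * K\<^sup>2"
      by (simp only: power_mult_distrib \<open>(norm v)\<^sup>2 = S\<close> power2_eq_square[of S])
    then show ?thesis
      using \<open>S \<ge> 0\<close> by (cases "S = 0") (auto simp: S_def mult_le_cancel_left_pos)
  qed
  define z where "z = (\<Sum>\<^sub>\<infinity>e\<in>E. smul (cnj (l e)) e)"
  have "(\<lambda>e. (cmod (cnj (l e)))\<^sup>2) summable_on E"
    by (rule nonneg_bdd_above_summable_on) (auto intro!: bdd_aboveI partial_sums)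
  then have z: "((\<lambda>e. smul (cnj (l e)) e) has_sum z) E"
    unfolding z_def by (rule has_sum_infsum[OF summable_on_orthonormal_combination[OF on]])
  have "l x = ip x z" for x
  proof (rule has_sum_unique)
    show "((\<lambda>e. l e * ip x e) has_sum l x) E"
      using has_sum_bounded_linear[OF l has_sum_orthonormal_expansion[OF E]]
      by (simp add: l_smul mult.commute)
    show "((\<lambda>e. l e * ip x e) has_sum ip x z) E"
      using has_sum_bounded_linear[OF bounded_linear_ip_right z] by (simp add: ip_smul_right)
  qed
  then show ?thesis by blast
qed

lemma ip_adjoint_op:
  assumes E: "orthonormal_basis ip E" and C: "bounded_op smul C"
  shows "ip (C x) y = ip x (adjoint_op ip C y)"
proof -
  have "\<exists>z. \<forall>x. ip (C x) y = ip x z"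
  proof (rule riesz_representation[OF E])
    show "bounded_linear (\<lambda>x. ip (C x) y)"
      by (rule bounded_linear_compose[OF bounded_linear_ip_left bounded_op_bounded_linear[OF C]])
    show "ip (C (smul a x)) y = a * ip (C x) y" for a x
      by (simp add: bounded_op_smul[OF C] ip_smul_left)
  qed
  then obtain z where z: "\<And>x. ip (C x) y = ip x z" by blast
  have "adjoint_op ip C y = z"
    unfolding adjoint_op_def
  proof (rule the_equality)
    show "\<forall>x. ip (C x) y = ip x z" using z by blast
    show "z' = z" if "\<forall>x. ip (C x) y = ip x z'" for z'
      by (rule ip_ext_right) (metis that z)
  qed
  then show ?thesis using z by simp
qed

text \<open>By Bessel in \<open>E2\<close> and Parseval in \<open>E1\<close>, every finite partial sum over \<open>E2\<close> is
  bounded by the Hilbert--Schmidt sum of \<open>C\<close> over \<open>E1\<close>.\<close>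
lemma summable_on_hilbert_schmidt_adjoint:
  assumes E1: "orthonormal_basis ip E1" and E2: "orthonormal_basis ip E2"
    and C: "(\<lambda>e. (norm (C e))\<^sup>2) summable_on E1"
    and adj: "\<And>x y. ip (C x) y = ip x (C' y)"
  shows "(\<lambda>f. (norm (C' f))\<^sup>2) summable_on E2"
proof (rule nonneg_bdd_above_summable_on)
  have "(\<Sum>f\<in>F. (norm (C' f))\<^sup>2) \<le> (\<Sum>\<^sub>\<infinity>e\<in>E1. (norm (C e))\<^sup>2)"
    if F: "F \<subseteq> E2" "finite F" for F
  proof (rule has_sum_mono)
    show "((\<lambda>e. \<Sum>f\<in>F. (cmod (ip (C e) f))\<^sup>2) has_sum (\<Sum>f\<in>F. (norm (C' f))\<^sup>2)) E1"
    proof (rule has_sum_sum[OF F(2)])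
      show "((\<lambda>e. (cmod (ip (C e) f))\<^sup>2) has_sum (norm (C' f))\<^sup>2) E1" for f
        using has_sum_parseval_norm[OF E1, of "C' f"] by (simp add: adj norm_ip_commute[of "C' f"])
    qed
    show "((\<lambda>e. (norm (C e))\<^sup>2) has_sum (\<Sum>\<^sub>\<infinity>e\<in>E1. (norm (C e))\<^sup>2)) E1"
      using C by simp
    show "(\<Sum>f\<in>F. (cmod (ip (C e) f))\<^sup>2) \<le> (norm (C e))\<^sup>2" for e
      by (rule bessel_inequality[OF orthonormal_basis_imp_orthonormal[OF E2] F])
  qed
  then show "bdd_above (sum (\<lambda>f. (norm (C' f))\<^sup>2) ` {F. F \<subseteq> E2 \<and> finite F})"
    by (auto intro!: bdd_aboveI)
qed simp

lemma norm_ip_mult_summable_bounded: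
  assumes "orthonormal E"
  shows "(\<lambda>e. cmod (ip x e) * cmod (ip e y)) summable_on E"
    and "(\<Sum>\<^sub>\<infinity>e\<in>E. cmod (ip x e) * cmod (ip e y)) \<le> norm x * norm y"
proof -
  have partial_sums: "(\<Sum>e\<in>F. cmod (ip x e) * cmod (ip e y)) \<le> norm x * norm y"
    if F: "F \<subseteq> E" "finite F" for F
  proof -
    have "(\<Sum>e\<in>F. cmod (ip x e) * cmod (ip e y))\<^sup>2
        \<le> (\<Sum>e\<in>F. (cmod (ip x e))\<^sup>2) * (\<Sum>e\<in>F. (cmod (ip y e))\<^sup>2)"
      using Cauchy_Schwarz_ineq_sum[of "\<lambda>e. cmod (ip x e)" "\<lambda>e. cmod (ip e y)" F]
      by (simp add: norm_ip_commute)
    also have "\<dots> \<le> (norm x)\<^sup>2 * (norm y)\<^sup>2"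
      using bessel_inequality[OF assms F] by (intro mult_mono) (auto intro: sum_nonneg)
    finally have "(\<Sum>e\<in>F. cmod (ip x e) * cmod (ip e y))\<^sup>2 \<le> (norm x * norm y)\<^sup>2"
      by (simp add: power_mult_distrib)
    then show ?thesis by (rule power2_le_imp_le) simp
  qed
  show s: "(\<lambda>e. cmod (ip x e) * cmod (ip e y)) summable_on E"
    by (rule nonneg_bdd_above_summable_on) (auto intro!: bdd_aboveI partial_sums)
  show "(\<Sum>\<^sub>\<infinity>e\<in>E. cmod (ip x e) * cmod (ip e y)) \<le> norm x * norm y"
    by (rule has_sum_le_finite_sums[OF has_sum_infsum[OF s]]) (auto intro: partial_sums)
qed

text \<open>\<open>trace_op\<close> sums over an arbitrary basis \<open>E0\<close>. Expanding each term in \<open>E\<close> and swapping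
  the two sums is justified since \<open>\<Sum>\<^sub>e \<bar>ip (B f) e * ip e (D' f)\<bar> \<le> norm (B f) * norm (D' f)\<close>,
  which is summable over \<open>E\<close>.\<close>
lemma trace_op_comp:
  assumes E: "orthonormal_basis ip E" and B: "bounded_op smul B"
    and adj: "\<And>x y. ip (D x) y = ip x (D' y)"
    and sB: "(\<lambda>f. (norm (B f))\<^sup>2) summable_on E"
    and sD: "(\<lambda>f. (norm (D' f))\<^sup>2) summable_on E"
  shows "trace_op ip (B \<circ> D) = (\<Sum>\<^sub>\<infinity>f\<in>E. ip (B f) (D' f))"
proof -
  define E0 where "E0 = (SOME E. orthonormal_basis ip E)"
  have E0: "orthonormal_basis ip E0" unfolding E0_def using E by (rule someI)
  have on0: "orthonormal E0" by (rule orthonormal_basis_imp_orthonormal[OF E0])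
  define k where "k e f = ip (B f) e * ip e (D' f)" for e f
  have "(\<lambda>f. \<Sum>\<^sub>\<infinity>e\<in>E0. cmod (k e f)) summable_on E"
  proof (rule summable_on_comparison_test)
    show "(\<lambda>f. norm (B f) * norm (D' f)) summable_on E"
      by (rule summable_on_mult_of_summable_on_square[OF sB sD])
    show "(\<Sum>\<^sub>\<infinity>e\<in>E0. cmod (k e f)) \<le> norm (B f) * norm (D' f)" for f
      using norm_ip_mult_summable_bounded(2)[OF on0, of "B f" "D' f"] by (simp add: k_def norm_mult)
  qed (simp add: infsum_nonneg)
  then have "(\<lambda>(f, e). cmod (k e f)) summable_on (E \<times> E0)"
    using norm_ip_mult_summable_bounded(1)[OF on0]
    by (intro summable_on_SigmaI[where g="\<lambda>f. \<Sum>\<^sub>\<infinity>e\<in>E0. cmod (k e f)"])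
       (auto simp: k_def norm_mult)
  then have "(\<lambda>(e, f). cmod (k e f)) summable_on (E0 \<times> E)"
    by (subst summable_on_swap) (simp add: case_prod_unfold)
  then have "(\<lambda>x. norm ((\<lambda>(e, f). k e f) x)) summable_on (E0 \<times> E)"
    by (simp add: case_prod_unfold)
  then have "(\<lambda>(e, f). k e f) summable_on (E0 \<times> E)"
    by (rule abs_summable_summable)
  then have "(\<Sum>\<^sub>\<infinity>e\<in>E0. \<Sum>\<^sub>\<infinity>f\<in>E. k e f) = (\<Sum>\<^sub>\<infinity>f\<in>E. \<Sum>\<^sub>\<infinity>e\<in>E0. k e f)"
    by (rule infsum_swap_banach)
  moreover have "(\<Sum>\<^sub>\<infinity>f\<in>E. k e f) = ip (B (D e)) e" for e
    using has_sum_ip_apply[OF E B, of "D e" e]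
    by (simp add: k_def adj ip_commute[of e] mult.commute infsumI)
  moreover have "(\<Sum>\<^sub>\<infinity>e\<in>E0. k e f) = ip (B f) (D' f)" for f
    unfolding k_def by (rule infsumI[OF has_sum_parseval[OF E0]])
  ultimately show ?thesis
    by (simp add: trace_op_def E0_def)
qed

lemma inv_fourier_U_eqI:
  assumes "\<And>\<phi> \<psi>. ip (A \<phi>) \<psi> = (\<integral>\<xi>. f \<xi> * ip (U \<xi> \<phi>) \<psi> \<partial>\<nu>)"
  shows "inv_fourier_U ip \<nu> U f = A"
proof
  show "inv_fourier_U ip \<nu> U f \<phi> = A \<phi>" for \<phi>
    unfolding inv_fourier_U_def
  proof (rule the_equality)
    show "\<forall>\<psi>. ip (A \<phi>) \<psi> = (\<integral>\<xi>. f \<xi> * ip (U \<xi> \<phi>) \<psi> \<partial>\<nu>)" using assms by blast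
    show "v = A \<phi>" if "\<forall>\<psi>. ip v \<psi> = (\<integral>\<xi>. f \<xi> * ip (U \<xi> \<phi>) \<psi> \<partial>\<nu>)" for v
      by (rule ip_ext_left) (use that assms in simp)
  qed
qed

end

section \<open>Square integrable representations\<close>

locale square_integrable_representation = complex_hilbert_space smul ip
  for smul :: "complex \<Rightarrow> 'h::banach \<Rightarrow> 'h" and ip +
  fixes \<mu> :: "'x::{topological_ab_group_add, t2_space} measure" and U :: "'x \<Rightarrow> 'h \<Rightarrow> 'h"
  assumes unitary: "unitary_op smul ip (U x)"
    and continuous: "continuous_on UNIV (\<lambda>x. U x \<phi>)"
    and haar: "haar_measure \<mu>"
    and square_integrable_coefficient: "square_integrable \<mu> (\<lambda>x. ip (U x \<phi>) \<psi>)"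
    and orthogonality:
      "(\<integral>x. ip (U x \<phi>1) \<psi>1 * cnj (ip (U x \<phi>2) \<psi>2) \<partial>\<mu>) = ip \<phi>1 \<phi>2 * cnj (ip \<psi>1 \<psi>2)"
begin

lemma U_add: "U x (v + w) = U x v + U x w"
  and U_smul: "U x (smul a v) = smul a (U x v)"
  and ip_U_U: "ip (U x v) (U x w) = ip v w"
  and surj_U: "surj (U x)"
  using unitary[of x] unfolding unitary_op_def clinear_op_def by simp_all

lemma norm_U: "norm (U x v) = norm v"
proof -
  have "complex_of_real ((norm (U x v))\<^sup>2) = complex_of_real ((norm v)\<^sup>2)"
    using ip_U_U[of x v v] by (simp only: ip_self)
  then have "(norm (U x v))\<^sup>2 = (norm v)\<^sup>2" by (simp only: of_real_eq_iff)
  then show ?thesis by (simp add: power2_eq_iff_nonneg)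
qed

lemma bounded_op_U: "bounded_op smul (U x)"
  unfolding bounded_op_def clinear_op_def by (auto simp: U_add U_smul norm_U intro: exI[of _ 1])

lemma ip_adjoint_U:
  assumes "orthonormal_basis ip E"
  shows "ip (adjoint_op ip (U x) v) w = ip v (U x w)"
  using ip_adjoint_op[OF assms bounded_op_U, of x w v]
    ip_commute[of v] ip_commute[of "adjoint_op ip (U x) v"]
  by simp

lemma sets_haar: "sets \<mu> = sets borel"
  using haar unfolding haar_measure_def by (rule conjunct1)

lemma continuous_on_coefficient: "continuous_on UNIV (\<lambda>x. ip (U x \<phi>) \<psi>)"
  by (rule bounded_linear.continuous_on[OF bounded_linear_ip_left continuous])

lemma borel_measurable_continuous_on_haar:
  "continuous_on UNIV g \<Longrightarrow> g \<in> borel_measurable \<mu>"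
  by (subst measurable_cong_sets[OF sets_haar refl]) (rule borel_measurable_continuous_onI)

lemma square_integrable_cnj_coefficient: "square_integrable \<mu> (\<lambda>x. cnj (ip (U x \<phi>) \<psi>))"
  using square_integrable_coefficient[of \<phi> \<psi>] continuous_on_coefficient[of \<phi> \<psi>]
  unfolding square_integrable_def
  by (auto intro: borel_measurable_continuous_on_haar continuous_intros)

lemma norm_coefficient_le: "cmod (ip (U x \<phi>) \<psi>) \<le> norm \<phi> * norm \<psi>"
  using norm_ip_le[of "U x \<phi>" \<psi>] by (simp add: norm_U)

lemma integral_norm_coefficient_square:
  "(\<integral>x. (cmod (ip (U x \<phi>) \<psi>))\<^sup>2 \<partial>\<mu>) = (norm \<phi>)\<^sup>2 * (norm \<psi>)\<^sup>2"
proof -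
  have "(\<integral>x. complex_of_real ((cmod (ip (U x \<phi>) \<psi>))\<^sup>2) \<partial>\<mu>)
      = complex_of_real ((norm \<phi>)\<^sup>2 * (norm \<psi>)\<^sup>2)"
    using orthogonality[of \<phi> \<psi> \<phi> \<psi>]
    by (simp only: complex_norm_square ip_self complex_cnj_complex_of_real of_real_mult)
  then show ?thesis by (simp only: integral_complex_of_real of_real_eq_iff)
qed

lemma integrable_coefficient_product:
  "integrable \<mu> (\<lambda>x. ip (U x \<phi>1) \<psi>1 * cnj (ip (U x \<phi>2) \<psi>2))"
  by (rule integrable_mult_square_integrable[OF square_integrable_coefficient
        square_integrable_cnj_coefficient])

lemma integral_norm_coefficient_product_le:
  "(\<integral>x. cmod (ip (U x \<phi>1) \<psi>1 * cnj (ip (U x \<phi>2) \<psi>2)) \<partial>\<mu>)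
    \<le> norm \<phi>1 * norm \<psi>1 * (norm \<phi>2 * norm \<psi>2)"
  using integral_norm_mult_le[OF square_integrable_coefficient square_integrable_cnj_coefficient,
      of \<phi>1 \<psi>1 \<phi>2 \<psi>2]
  by (simp add: integral_norm_coefficient_square real_sqrt_mult)

lemma fourier_U_comp:
  assumes E: "orthonormal_basis ip E" and B: "bounded_op smul B" and C: "bounded_op smul C"
    and "(\<lambda>f. (norm (B f))\<^sup>2) summable_on E"
    and "(\<lambda>f. (norm (adjoint_op ip C f))\<^sup>2) summable_on E"
  shows "fourier_U ip U (B \<circ> C) \<xi> = (\<Sum>\<^sub>\<infinity>f\<in>E. ip (B f) (U \<xi> (adjoint_op ip C f)))"
proof -
  have "fourier_U ip U (B \<circ> C) \<xi> = trace_op ip (B \<circ> (C \<circ> adjoint_op ip (U \<xi>)))"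
    by (simp add: fourier_U_def o_assoc)
  also have "\<dots> = (\<Sum>\<^sub>\<infinity>f\<in>E. ip (B f) ((U \<xi> \<circ> adjoint_op ip C) f))"
  proof (rule trace_op_comp[OF E B])
    show "ip ((C \<circ> adjoint_op ip (U \<xi>)) x) y = ip x ((U \<xi> \<circ> adjoint_op ip C) y)" for x y
      by (simp add: ip_adjoint_op[OF E C] ip_adjoint_U[OF E])
  qed (use assms in \<open>simp_all add: norm_U\<close>)
  finally show ?thesis by simp
qed

lemma square_integrable_coefficient_square:
  "square_integrable \<mu> (\<lambda>x. ip (U x \<phi>) \<phi> * cnj (ip (U x \<phi>) \<phi>))"
  unfolding square_integrable_def
proof
  show "(\<lambda>x. ip (U x \<phi>) \<phi> * cnj (ip (U x \<phi>) \<phi>)) \<in> borel_measurable \<mu>"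
    by (intro borel_measurable_continuous_on_haar continuous_intros continuous_on_coefficient)
  show "integrable \<mu> (\<lambda>x. (cmod (ip (U x \<phi>) \<phi> * cnj (ip (U x \<phi>) \<phi>)))\<^sup>2)"
  proof (rule Bochner_Integration.integrable_bound)
    show "integrable \<mu> (\<lambda>x. (norm \<phi>)^4 * (cmod (ip (U x \<phi>) \<phi>))\<^sup>2)"
      using square_integrable_coefficient[of \<phi> \<phi>] unfolding square_integrable_def by simp
    show "(\<lambda>x. (cmod (ip (U x \<phi>) \<phi> * cnj (ip (U x \<phi>) \<phi>)))\<^sup>2) \<in> borel_measurable \<mu>"
      by (intro borel_measurable_continuous_on_haar continuous_intros continuous_on_coefficient)
    have "(cmod (ip (U x \<phi>) \<phi> * cnj (ip (U x \<phi>) \<phi>)))\<^sup>2 \<le> (norm \<phi>)^4 * (cmod (ip (U x \<phi>) \<phi>))\<^sup>2"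
      for x
    proof -
      have "(cmod (ip (U x \<phi>) \<phi>))\<^sup>2 \<le> (norm \<phi> * norm \<phi>)\<^sup>2"
        by (rule power_mono[OF norm_coefficient_le]) simp
      then have "(cmod (ip (U x \<phi>) \<phi>))\<^sup>2 * (cmod (ip (U x \<phi>) \<phi>))\<^sup>2
          \<le> (norm \<phi>)^4 * (cmod (ip (U x \<phi>) \<phi>))\<^sup>2"
        by (intro mult_right_mono) (simp_all add: power_mult_distrib flip: power_add)
      then show ?thesis by (simp add: norm_mult power_mult_distrib)
    qed
    then show "AE x in \<mu>. norm ((cmod (ip (U x \<phi>) \<phi> * cnj (ip (U x \<phi>) \<phi>)))\<^sup>2)
        \<le> norm ((norm \<phi>)^4 * (cmod (ip (U x \<phi>) \<phi>))\<^sup>2)"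
      by (intro AE_I2) simp
  qed
qed

lemma integral_infsum_coefficient_product:
  assumes "(\<lambda>f. (norm (a f))\<^sup>2) summable_on E" and "(\<lambda>f. (norm (b f))\<^sup>2) summable_on E"
  shows "(\<integral>\<xi>. (\<Sum>\<^sub>\<infinity>f\<in>E. ip (U \<xi> \<phi>) \<psi> * cnj (ip (U \<xi> (a f)) (b f))) \<partial>\<mu>)
    = (\<Sum>\<^sub>\<infinity>f\<in>E. ip \<phi> (a f) * cnj (ip \<psi> (b f)))"
proof -
  have "(\<integral>\<xi>. (\<Sum>\<^sub>\<infinity>f\<in>E. ip (U \<xi> \<phi>) \<psi> * cnj (ip (U \<xi> (a f)) (b f))) \<partial>\<mu>)
      = (\<Sum>\<^sub>\<infinity>f\<in>E. \<integral>\<xi>. ip (U \<xi> \<phi>) \<psi> * cnj (ip (U \<xi> (a f)) (b f)) \<partial>\<mu>)"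
  proof (rule integral_infsum[where w="\<lambda>f. norm \<phi> * norm \<psi> * (norm (a f) * norm (b f))"])
    show "norm (ip (U \<xi> \<phi>) \<psi> * cnj (ip (U \<xi> (a f)) (b f)))
        \<le> norm \<phi> * norm \<psi> * (norm (a f) * norm (b f))" for f \<xi>
      unfolding norm_mult complex_mod_cnj by (intro mult_mono norm_coefficient_le) auto
    show "(\<lambda>f. norm \<phi> * norm \<psi> * (norm (a f) * norm (b f))) summable_on E"
      by (intro summable_on_cmult_right summable_on_mult_of_summable_on_square assms)
  qed (auto intro: integrable_coefficient_product integral_norm_coefficient_product_le)
  then show ?thesis by (simp add: orthogonality)
qed

lemma trace_class_weak_fourier_inversion:
  assumes "trace_class smul ip A"
  shows "ip (A \<phi>) \<psi> = (\<integral>\<xi>. fourier_U ip U A \<xi> * ip (U \<xi> \<phi>) \<psi> \<partial>\<mu>)"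
proof -
  obtain B C where "hilbert_schmidt smul ip B" "hilbert_schmidt smul ip C" and A: "A = B \<circ> C"
    using assms unfolding trace_class_def by blast
  then obtain E EC where E: "orthonormal_basis ip E" and B: "bounded_op smul B"
    and sB: "(\<lambda>f. (norm (B f))\<^sup>2) summable_on E"
    and EC: "orthonormal_basis ip EC" and C: "bounded_op smul C"
    and sC: "(\<lambda>e. (norm (C e))\<^sup>2) summable_on EC"
    unfolding hilbert_schmidt_def by blast
  define C' where "C' = adjoint_op ip C"
  have adj: "ip (C x) y = ip x (C' y)" for x y
    unfolding C'_def by (rule ip_adjoint_op[OF E C])
  have sC': "(\<lambda>f. (norm (C' f))\<^sup>2) summable_on E"
    by (rule summable_on_hilbert_schmidt_adjoint[OF EC E sC adj])
  have "fourier_U ip U A \<xi> * ip (U \<xi> \<phi>) \<psi>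
      = (\<Sum>\<^sub>\<infinity>f\<in>E. ip (U \<xi> \<phi>) \<psi> * cnj (ip (U \<xi> (C' f)) (B f)))" for \<xi>
  proof -
    have "fourier_U ip U A \<xi> * ip (U \<xi> \<phi>) \<psi>
        = (\<Sum>\<^sub>\<infinity>f\<in>E. ip (U \<xi> \<phi>) \<psi> * ip (B f) (U \<xi> (C' f)))"
      using fourier_U_comp[OF E B C sB sC'[unfolded C'_def]]
      by (simp add: A C'_def infsum_cmult_right' mult.commute)
    then show ?thesis by (simp add: ip_commute[of "B _"])
  qed
  then have "(\<integral>\<xi>. fourier_U ip U A \<xi> * ip (U \<xi> \<phi>) \<psi> \<partial>\<mu>)
      = (\<Sum>\<^sub>\<infinity>f\<in>E. ip \<phi> (C' f) * cnj (ip \<psi> (B f)))"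
    by (simp add: integral_infsum_coefficient_product[OF sC' sB])
  also have "\<dots> = (\<Sum>\<^sub>\<infinity>f\<in>E. ip (C \<phi>) f * ip (B f) \<psi>)"
    by (simp add: adj ip_commute[of \<psi>])
  also have "\<dots> = ip (A \<phi>) \<psi>"
    unfolding A by (simp add: infsumI[OF has_sum_ip_apply[OF E B]])
  finally show ?thesis ..
qed

end

locale projective_square_integrable_representation =
  square_integrable_representation smul ip \<mu> U
  for smul :: "complex \<Rightarrow> 'h::banach \<Rightarrow> 'h" and ip \<mu>
    and U :: "'x::{topological_ab_group_add, t2_space} \<Rightarrow> 'h \<Rightarrow> 'h" +
  fixes m :: "'x \<Rightarrow> 'x \<Rightarrow> complex"
  assumes multiplier: "multiplier m"
    and U_mult: "U x \<circ> U y = (\<lambda>v. smul (m x y) (U (x + y) v))"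
begin

lemma U_zero: "U 0 v = v"
proof -
  obtain w where v: "v = U 0 w" using surj_U by (metis surjD)
  have "m 0 0 = 1" using multiplier unfolding multiplier_def by simp
  then have "U 0 (U 0 w) = U 0 w" using fun_cong[OF U_mult[of 0 0], of w] by simp
  then show ?thesis using v by simp
qed

lemma U_commute: "U x (U y v) = smul (sympl m x y) (U y (U x v))"
proof -
  have "cmod (m y x) = 1" using multiplier unfolding multiplier_def by simp
  then have "m y x \<noteq> 0" by auto
  have "U x (U y v) = smul (m x y) (U (x + y) v)"
    using fun_cong[OF U_mult[of x y], of v] by simp
  moreover have "U y (U x v) = smul (m y x) (U (x + y) v)"
    using fun_cong[OF U_mult[of y x], of v] by (simp add: add.commute)
  ultimately show ?thesis using \<open>m y x \<noteq> 0\<close> by (simp add: sympl_def smul_smul)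
qed

text \<open>The commutation relation turns the symplectic Fourier transform of
  \<open>\<bar>ip (U x \<phi>) \<phi>\<bar>\<^sup>2\<close> into an instance of the orthogonality relations.\<close>
lemma sympl_fourier_coefficient_square:
  "sympl_fourier m \<mu> (\<lambda>x. ip (U x \<phi>) \<phi> * cnj (ip (U x \<phi>) \<phi>))
    = (\<lambda>x. ip (U x \<phi>) \<phi> * cnj (ip (U x \<phi>) \<phi>))"
proof
  fix \<xi>
  have "sympl m x \<xi> * ip (U x \<phi>) \<phi> = ip (U x (U \<xi> \<phi>)) (U \<xi> \<phi>)" for x
    by (simp add: U_commute[of x \<xi> \<phi>] ip_smul_left ip_U_U)
  then have "sympl_fourier m \<mu> (\<lambda>x. ip (U x \<phi>) \<phi> * cnj (ip (U x \<phi>) \<phi>)) \<xi>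
      = (\<integral>x. ip (U x (U \<xi> \<phi>)) (U \<xi> \<phi>) * cnj (ip (U x \<phi>) \<phi>) \<partial>\<mu>)"
    unfolding sympl_fourier_def by (simp add: mult.assoc[symmetric])
  also have "\<dots> = ip (U \<xi> \<phi>) \<phi> * cnj (ip (U \<xi> \<phi>) \<phi>)"
    by (rule orthogonality)
  finally show "sympl_fourier m \<mu> (\<lambda>x. ip (U x \<phi>) \<phi> * cnj (ip (U x \<phi>) \<phi>)) \<xi>
      = ip (U \<xi> \<phi>) \<phi> * cnj (ip (U \<xi> \<phi>) \<phi>)" .
qed

lemma integral_coefficient_fourth_power_pos:
  assumes "\<phi> \<noteq> 0"
  shows "0 < (\<integral>x. (cmod (ip (U x \<phi>) \<phi> * cnj (ip (U x \<phi>) \<phi>)))\<^sup>2 \<partial>\<mu>)"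
proof (rule haar_integral_pos[OF haar])
  show "continuous_on UNIV (\<lambda>x. (cmod (ip (U x \<phi>) \<phi> * cnj (ip (U x \<phi>) \<phi>)))\<^sup>2)"
    by (intro continuous_intros continuous_on_coefficient)
  show "integrable \<mu> (\<lambda>x. (cmod (ip (U x \<phi>) \<phi> * cnj (ip (U x \<phi>) \<phi>)))\<^sup>2)"
    using square_integrable_coefficient_square unfolding square_integrable_def by blast
  show "(cmod (ip (U 0 \<phi>) \<phi> * cnj (ip (U 0 \<phi>) \<phi>)))\<^sup>2 \<noteq> 0"
    using assms by (simp add: U_zero ip_self)
qed simp

lemma dual_measure_eq:
  fixes \<nu> :: "'x measure" and \<phi> :: 'h
  assumes scaled: "sets \<nu> = sets borel \<and>
      (\<exists>c>0. \<forall>B\<in>sets borel. emeasure \<nu> B = ennreal c * emeasure \<mu> B)"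
    and plancherel: "\<forall>f. integrable \<mu> f \<and> square_integrable \<mu> f \<longrightarrow>
      square_integrable \<nu> (sympl_fourier m \<mu> f) \<and>
      (\<integral>\<xi>. (cmod (sympl_fourier m \<mu> f \<xi>))\<^sup>2 \<partial>\<nu>) = (\<integral>x. (cmod (f x))\<^sup>2 \<partial>\<mu>)"
    and "\<phi> \<noteq> 0"
  shows "\<nu> = \<mu>"
proof -
  define f where "f x = ip (U x \<phi>) \<phi> * cnj (ip (U x \<phi>) \<phi>)" for x
  obtain c where "c > 0" and c_borel: "\<forall>B\<in>sets borel. emeasure \<nu> B = ennreal c * emeasure \<mu> B"
    using scaled by blast
  have sets: "sets \<nu> = sets \<mu>" using scaled sets_haar by simp
  have c: "emeasure \<nu> B = ennreal c * emeasure \<mu> B" if "B \<in> sets \<mu>" for B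
    using c_borel that sets_haar by simp
  have "integrable \<mu> f \<and> square_integrable \<mu> f"
    unfolding f_def using integrable_coefficient_product square_integrable_coefficient_square by simp
  then have "(\<integral>\<xi>. (cmod (sympl_fourier m \<mu> f \<xi>))\<^sup>2 \<partial>\<nu>) = (\<integral>x. (cmod (f x))\<^sup>2 \<partial>\<mu>)"
    using plancherel by blast
  moreover have "sympl_fourier m \<mu> f = f"
    unfolding f_def by (rule sympl_fourier_coefficient_square)
  ultimately have "(\<integral>x. (cmod (f x))\<^sup>2 \<partial>\<nu>) = (\<integral>x. (cmod (f x))\<^sup>2 \<partial>\<mu>)"
    by simp
  moreover have "(\<integral>x. (cmod (f x))\<^sup>2 \<partial>\<nu>) = c * (\<integral>x. (cmod (f x))\<^sup>2 \<partial>\<mu>)"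
  proof -
    have meas: "(\<lambda>x. (cmod (f x))\<^sup>2) \<in> borel_measurable \<mu>"
      using square_integrable_coefficient_square[of \<phi>] unfolding square_integrable_def f_def
      by (blast intro: borel_measurable_integrable)
    show ?thesis
      using integral_scaled_measure[OF sets c less_imp_le[OF \<open>c > 0\<close>] meas] by simp
  qed
  ultimately have "c = 1"
    using integral_coefficient_fourth_power_pos[OF \<open>\<phi> \<noteq> 0\<close>] unfolding f_def by simp
  then show ?thesis using sets c by (intro measure_eqI) simp_all
qed

end

theorem proposition6p20:
  fixes m :: "'x::{topological_ab_group_add, t2_space} \<Rightarrow> 'x \<Rightarrow> complex"
    and \<mu> \<nu> :: "'x measure"
    and smul :: "complex \<Rightarrow> 'h::banach \<Rightarrow> 'h"
    and ip :: "'h \<Rightarrow> 'h \<Rightarrow> complex"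
    and U :: "'x \<Rightarrow> 'h \<Rightarrow> 'h"
    and A :: "'h \<Rightarrow> 'h"
  assumes lcg: "locally_compact_group TYPE('x)"
    and mult: "multiplier m"
    and heis: "heisenberg m"
    and hilb: "complex_hilbert smul ip"
    and U_unitary: "\<forall>x. unitary_op smul ip (U x)"
    and U_proj: "\<forall>x y. U x \<circ> U y = (\<lambda>v. smul (m x y) (U (x + y) v))"
    and U_cont: "\<forall>\<phi>. continuous_on UNIV (\<lambda>x. U x \<phi>)"
    and U_irred: "\<forall>S. closed_csubspace smul S \<and> (\<forall>x. U x ` S \<subseteq> S) \<longrightarrow> S = {0} \<or> S = UNIV"
    and haar: "haar_measure \<mu>"
    and U_sqint: "\<forall>\<phi> \<psi>. square_integrable \<mu> (\<lambda>x. ip (U x \<phi>) \<psi>)"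
    and U_orth: "\<forall>\<phi>1 \<psi>1 \<phi>2 \<psi>2.
        (\<integral>x. ip (U x \<phi>1) \<psi>1 * cnj (ip (U x \<phi>2) \<psi>2) \<partial>\<mu>) = ip \<phi>1 \<phi>2 * cnj (ip \<psi>1 \<psi>2)"
    and dual_scale: "sets \<nu> = sets borel \<and>
        (\<exists>c>0. \<forall>B\<in>sets borel. emeasure \<nu> B = ennreal c * emeasure \<mu> B)"
    and plancherel: "\<forall>f. integrable \<mu> f \<and> square_integrable \<mu> f \<longrightarrow>
        square_integrable \<nu> (sympl_fourier m \<mu> f) \<and>
        (\<integral>\<xi>. (cmod (sympl_fourier m \<mu> f \<xi>))\<^sup>2 \<partial>\<nu>) = (\<integral>x. (cmod (f x))\<^sup>2 \<partial>\<mu>)"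
    and A_tc: "trace_class smul ip A"
    and FA_L1: "integrable \<nu> (fourier_U ip U A)"
  shows "inv_fourier_U ip \<nu> U (fourier_U ip U A) = A"
proof -
  interpret projective_square_integrable_representation smul ip \<mu> U m
    by unfold_locales (simp_all add: hilb U_unitary U_cont haar U_sqint U_orth mult U_proj)
  show ?thesis
  proof (cases "\<exists>\<phi>::'h. \<phi> \<noteq> 0")
    case True
    then obtain \<phi> :: 'h where "\<phi> \<noteq> 0" by blast
    have "\<nu> = \<mu>" by (rule dual_measure_eq[OF dual_scale plancherel \<open>\<phi> \<noteq> 0\<close>])
    then show ?thesis
      by (intro inv_fourier_U_eqI) (simp add: trace_class_weak_fourier_inversion[OF A_tc])
  next
    case False
    then show ?thesis by (intro ext) (metis (full_types))
  qed
qed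

end
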